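(* Let $f\in L^2(\mathbb{R},\Phi)$ be a convex function that is not identically zero. Then $f$ has Hermite rank at most $2$, i.e. at least one of $\int f h_0\,d\Phi$, $\int f h_1\,d\Phi$, $\int f h_2\,d\Phi$ is nonzero.
   Context: $\Phi$ denotes the standard normal distribution on $\mathbb{R}$ and $L^2(\mathbb{R},\Phi)=\{f:\int f^2\,d\Phi<\infty\}$. The Hermite polynomials are $h_m(x)=(-1)^m e^{x^2/2}\frac{d^m}{dx^m}e^{-x^2/2}$, $m=0,1,2,\dots$ (so $h_0=1$, $h_1(x)=x$, $h_2(x)=x^2-1$); they form an orthogonal basis of $L^2(\mathbb{R},\Phi)$, so every $f\in L^2(\mathbb{R},\Phi)$ has a unique expansion $f=\sum_{i\ge0}c_ih_i$. The Hermite rank of a nonzero $f$ is the smallest index $i$ with $c_i\neq 0$, equivalently with $\int f h_i\,d\Phi\ne 0$. *)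

theory Defs
  imports "HOL-Probability.Probability"
begin

definition std_gauss :: "real measure" where
  "std_gauss = density lborel std_normal_density"

definition hermite :: "nat \<Rightarrow> real \<Rightarrow> real" where
  "hermite m x = (-1) ^ m * exp (x\<^sup>2 / 2) * ((deriv ^^ m) (\<lambda>t. exp (- t\<^sup>2 / 2)) x)"

definition L2_gauss :: "(real \<Rightarrow> real) \<Rightarrow> bool" where
  "L2_gauss f \<longleftrightarrow> f \<in> borel_measurable borel \<and> integrable std_gauss (\<lambda>x. (f x)\<^sup>2)"

end

theory Submission
  imports Defs
begin

text \<open>Let \<open>\<ell>\<close> be the chord of \<open>f\<close> through \<open>-1\<close> and \<open>1\<close>. By convexity \<open>g = f - \<ell>\<close> is
  \<open>\<le> 0\<close> on \<open>[-1, 1]\<close> and \<open>\<ge> 0\<close> outside, exactly the sign pattern of \<open>h\<^sub>2(x) = x\<^sup>2 - 1\<close>, so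
  \<open>g h\<^sub>2 \<ge> 0\<close>. Affine functions are orthogonal to \<open>h\<^sub>2\<close>, hence if \<open>f \<perp> h\<^sub>2\<close> then
  \<open>\<integral> g h\<^sub>2 d\<Phi> = 0\<close>, and continuity of the convex \<open>g\<close> forces \<open>g = 0\<close>. Thus \<open>f\<close> is affine, and
  \<open>f \<perp> h\<^sub>0, h\<^sub>1\<close> makes it vanish.\<close>

lemma hermite_0 [simp]: "hermite 0 x = 1"
  by (simp add: hermite_def) (metis exp_minus_inverse)

lemma hermite_1 [simp]: "hermite 1 x = x"
proof -
  have "deriv (\<lambda>t::real. exp (- t\<^sup>2 / 2)) x = - x * exp (- x\<^sup>2 / 2)" for x
    by (rule DERIV_imp_deriv) (auto intro!: derivative_eq_intros)
  then show ?thesis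
    by (simp add: hermite_def exp_minus_inverse)
qed

lemma hermite_2 [simp]: "hermite 2 x = x\<^sup>2 - 1"
proof -
  have funpow_2_apply: "(deriv ^^ 2) F = deriv (deriv F)" for F :: "real \<Rightarrow> real"
    by (simp add: numeral_2_eq_2)
  have d1: "deriv (\<lambda>t::real. exp (- t\<^sup>2 / 2)) = (\<lambda>t. - t * exp (- t\<^sup>2 / 2))"
    by (rule ext, rule DERIV_imp_deriv) (auto intro!: derivative_eq_intros)
  have d2: "deriv (\<lambda>t::real. - t * exp (- t\<^sup>2 / 2)) = (\<lambda>t. (t\<^sup>2 - 1) * exp (- t\<^sup>2 / 2))"
    by (rule ext, rule DERIV_imp_deriv)
      (auto intro!: derivative_eq_intros simp: algebra_simps power2_eq_square)
  have "(deriv ^^ 2) (\<lambda>t::real. exp (- t\<^sup>2 / 2)) = (\<lambda>t. (t\<^sup>2 - 1) * exp (- t\<^sup>2 / 2))"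
    unfolding funpow_2_apply d1 d2 ..
  then show ?thesis
    by (simp add: hermite_def exp_minus_inverse)
qed

lemma integral_std_gauss:
  assumes "h \<in> borel_measurable borel"
  shows "(\<integral>x. h x \<partial>std_gauss) = (\<integral>x. std_normal_density x * h x \<partial>lborel)"
  unfolding std_gauss_def using assms by (subst integral_density) auto

lemma integrable_std_gauss_iff:
  assumes "h \<in> borel_measurable borel"
  shows "integrable std_gauss h \<longleftrightarrow> integrable lborel (\<lambda>x. std_normal_density x * h x)"
  unfolding std_gauss_def using assms by (subst integrable_density) auto

lemma AE_std_gauss_iff: "(AE x in std_gauss. P x) \<longleftrightarrow> (AE x in lborel. P x)"
  unfolding std_gauss_def by (subst AE_density) (auto simp: normal_density_pos)

lemma has_bochner_integral_std_gauss_power_even: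
  "has_bochner_integral std_gauss (\<lambda>x. x ^ (2 * k)) (fact (2 * k) / (2 ^ k * fact k))"
  using std_normal_moment_even[of k]
  by (simp add: has_bochner_integral_iff integrable_std_gauss_iff integral_std_gauss)

lemma has_bochner_integral_std_gauss_power_odd:
  "has_bochner_integral std_gauss (\<lambda>x. x ^ (2 * k + 1)) 0"
  using std_normal_moment_odd[of k]
  by (simp add: has_bochner_integral_iff integrable_std_gauss_iff integral_std_gauss)

lemma integrable_std_gauss_power: "integrable std_gauss (\<lambda>x. x ^ k)"
  using integrable_std_normal_moment[of k] by (simp add: integrable_std_gauss_iff)

lemma integrable_mult_if_square_integrable:
  fixes f g :: "'a \<Rightarrow> real"
  assumes [measurable]: "f \<in> borel_measurable M" "g \<in> borel_measurable M"
    and "integrable M (\<lambda>x. (f x)\<^sup>2)" "integrable M (\<lambda>x. (g x)\<^sup>2)"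
  shows "integrable M (\<lambda>x. f x * g x)"
proof (rule Bochner_Integration.integrable_bound)
  show "integrable M (\<lambda>x. (f x)\<^sup>2 + (g x)\<^sup>2)"
    using assms by (intro Bochner_Integration.integrable_add)
  have "\<bar>a * b\<bar> \<le> a\<^sup>2 + b\<^sup>2" for a b :: real
    using sum_squares_bound[of "\<bar>a\<bar>" "\<bar>b\<bar>"] abs_ge_zero[of "a * b"]
    unfolding abs_mult power2_abs by linarith
  then show "AE x in M. norm (f x * g x) \<le> norm ((f x)\<^sup>2 + (g x)\<^sup>2)"
    by simp
qed measurable

lemma L2_gauss_integrable_mult_power:
  assumes "L2_gauss f"
  shows "integrable std_gauss (\<lambda>x. f x * x ^ k)"
proof (rule integrable_mult_if_square_integrable)
  show "integrable std_gauss (\<lambda>x. (x ^ k)\<^sup>2)"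
    using integrable_std_gauss_power[of "2 * k"] by (simp add: power_mult[symmetric] mult.commute)
qed (use assms in \<open>auto simp: L2_gauss_def std_gauss_def\<close>)

lemma convex_on_UNIV_three_points:
  fixes f :: "real \<Rightarrow> real"
  assumes "convex_on UNIV f" "u < v" "v < w"
  shows "(w - u) * f v \<le> (w - v) * f u + (v - u) * f w"
proof -
  have "f v \<le> (f w - f u) / (w - u) * (v - u) + f u"
    using assms by (intro convex_onD_Icc' convex_on_subset[OF assms(1)]) auto
  then have "(w - u) * f v \<le> (w - u) * ((f w - f u) / (w - u) * (v - u) + f u)"
    using assms by (intro mult_left_mono) auto
  also have "\<dots> = (w - v) * f u + (v - u) * f w"
    using assms by (simp add: field_simps)
  finally show ?thesis .
qed

lemma convex_on_UNIV_sign_between_zeros: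
  fixes g :: "real \<Rightarrow> real"
  assumes "convex_on UNIV g" "g (-1) = 0" "g 1 = 0"
  shows "0 \<le> g x * (x\<^sup>2 - 1)"
proof -
  have factor: "x\<^sup>2 - 1 = (x + 1) * (x - 1)"
    by (simp add: algebra_simps power2_eq_square)
  consider "x < -1" | "-1 < x" "x < 1" | "1 < x" | "x = -1 \<or> x = 1"
    by linarith
  then show ?thesis
  proof cases
    case 1
    with convex_on_UNIV_three_points[OF assms(1) 1, of 1] assms have "0 \<le> g x"
      by (simp add: zero_le_mult_iff)
    with 1 show ?thesis
      unfolding factor by (simp add: mult_nonpos_nonpos)
  next
    case 2
    with convex_on_UNIV_three_points[OF assms(1), of "-1" x 1] assms have "g x \<le> 0"
      by simp
    with 2 show ?thesis
      unfolding factor by (simp add: mult_nonpos_nonpos mult_nonneg_nonpos)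
  next
    case 3
    with convex_on_UNIV_three_points[OF assms(1), of "-1" 1 x] assms have "0 \<le> g x"
      by (simp add: zero_le_mult_iff)
    with 3 show ?thesis
      unfolding factor by simp
  qed (use assms in auto)
qed

lemma continuous_eq_0_if_AE_lborel_eq_0:
  fixes h :: "real \<Rightarrow> real"
  assumes "continuous_on UNIV h" "AE x in lborel. h x = 0"
  shows "h x = 0"
proof -
  have "closed {x. h x = 0}"
    using assms(1) by (intro closed_Collect_eq) auto
  moreover have "AE x in lebesgue. x \<in> {x. h x = 0}"
    using AE_completion[OF assms(2)] by simp
  ultimately show ?thesis
    using mem_closed_if_AE_lebesgue by blast
qed

lemma convex_on_UNIV_eq_0_if_orthogonal_hermite_2:
  fixes g :: "real \<Rightarrow> real"
  assumes convex: "convex_on UNIV g" and zeros: "g (-1) = 0" "g 1 = 0"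
    and orth: "has_bochner_integral std_gauss (\<lambda>x. g x * (x\<^sup>2 - 1)) 0"
  shows "g x = 0"
proof -
  have cont: "continuous_on UNIV (\<lambda>x. g x * (x\<^sup>2 - 1))"
    using convex_on_continuous[OF open_UNIV convex] by (intro continuous_intros)
  have "AE x in std_gauss. g x * (x\<^sup>2 - 1) = 0"
    using orth convex_on_UNIV_sign_between_zeros[OF convex zeros]
    by (subst integral_nonneg_eq_0_iff_AE[symmetric]) (auto simp: has_bochner_integral_iff)
  then have "g x * (x\<^sup>2 - 1) = 0"
    by (intro continuous_eq_0_if_AE_lborel_eq_0[OF cont]) (simp add: AE_std_gauss_iff)
  then show ?thesis
    using zeros by (auto simp: power2_eq_1_iff)
qed

lemma convex_on_diff_affine:
  fixes f :: "real \<Rightarrow> real"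
  assumes "convex_on S f"
  shows "convex_on S (\<lambda>x. f x - (c + a * x))"
proof (rule convex_on_diff[OF assms])
  show "concave_on S (\<lambda>x. c + a * x)"
    using convex_on_imp_convex[OF assms]
    by (auto simp: concave_on_def convex_on_def algebra_simps simp flip: distrib_right)
qed

lemma has_bochner_integral_std_gauss_affine_mult_hermite_2:
  "has_bochner_integral std_gauss (\<lambda>x. (c + a * x) * (x\<^sup>2 - 1)) 0"
proof -
  have "has_bochner_integral std_gauss
      (\<lambda>x. c * x ^ (2 * 1) - c * x ^ (2 * 0) + (a * x ^ (2 * 1 + 1) - a * x ^ (2 * 0 + 1)))
      (c * 1 - c * 1 + (a * 0 - a * 0))"
    using has_bochner_integral_std_gauss_power_even[of 1] has_bochner_integral_std_gauss_power_even[of 0]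
      has_bochner_integral_std_gauss_power_odd[of 1] has_bochner_integral_std_gauss_power_odd[of 0]
    by (intro has_bochner_integral_add has_bochner_integral_diff has_bochner_integral_mult_right) auto
  then show ?thesis
    by (simp add: algebra_simps power2_eq_square power3_eq_cube)
qed

lemma has_bochner_integral_std_gauss_affine:
  "has_bochner_integral std_gauss (\<lambda>x. c + a * x) c"
  "has_bochner_integral std_gauss (\<lambda>x. (c + a * x) * x) a"
proof -
  note moments = has_bochner_integral_std_gauss_power_even[of 0] has_bochner_integral_std_gauss_power_even[of 1]
    has_bochner_integral_std_gauss_power_odd[of 0]
  have "has_bochner_integral std_gauss (\<lambda>x. c * x ^ (2 * 0) + a * x ^ (2 * 0 + 1)) (c * 1 + a * 0)"
    using moments by (intro has_bochner_integral_add has_bochner_integral_mult_right) auto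
  then show "has_bochner_integral std_gauss (\<lambda>x. c + a * x) c"
    by simp
  have "has_bochner_integral std_gauss (\<lambda>x. c * x ^ (2 * 0 + 1) + a * x ^ (2 * 1)) (c * 0 + a * 1)"
    using moments by (intro has_bochner_integral_add has_bochner_integral_mult_right) auto
  then show "has_bochner_integral std_gauss (\<lambda>x. (c + a * x) * x) a"
    by (simp add: algebra_simps power2_eq_square)
qed

theorem lemma2:
  fixes f :: "real \<Rightarrow> real"
  assumes "L2_gauss f"
    and "convex_on UNIV f"
    and "f \<noteq> (\<lambda>x. 0)"
  shows "\<exists>i\<le>2. (\<integral>x. f x * hermite i x \<partial>std_gauss) \<noteq> 0"
proof (rule ccontr)
  assume "\<not> ?thesis"
  then have orth: "(\<integral>x. f x * hermite i x \<partial>std_gauss) = 0" if "i \<le> 2" for i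
    using that by auto
  note integrable = L2_gauss_integrable_mult_power[OF assms(1)]
  have orth_0: "has_bochner_integral std_gauss f 0"
    using orth[of 0] integrable[of 0] by (simp add: has_bochner_integral_iff)
  have orth_1: "has_bochner_integral std_gauss (\<lambda>x. f x * x) 0"
    using orth[of 1, unfolded hermite_1] integrable[of 1] by (simp add: has_bochner_integral_iff)
  have orth_2: "has_bochner_integral std_gauss (\<lambda>x. f x * (x\<^sup>2 - 1)) 0"
    using orth[of 2] Bochner_Integration.integrable_diff[OF integrable[of 2] integrable[of 0]]
    by (simp add: has_bochner_integral_iff right_diff_distrib)
  define a where "a = (f 1 - f (-1)) / 2"
  define c where "c = (f 1 + f (-1)) / 2"
  have "f x - (c + a * x) = 0" for x
  proof (rule convex_on_UNIV_eq_0_if_orthogonal_hermite_2[where g = "\<lambda>x. f x - (c + a * x)"])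
    show "convex_on UNIV (\<lambda>x. f x - (c + a * x))"
      using assms(2) by (rule convex_on_diff_affine)
    show "f (-1) - (c + a * -1) = 0" "f 1 - (c + a * 1) = 0"
      by (simp_all add: a_def c_def field_simps)
    show "has_bochner_integral std_gauss (\<lambda>x. (f x - (c + a * x)) * (x\<^sup>2 - 1)) 0"
      using has_bochner_integral_diff[OF orth_2 has_bochner_integral_std_gauss_affine_mult_hermite_2]
      by (simp add: left_diff_distrib)
  qed
  then have affine: "f = (\<lambda>x. c + a * x)"
    by auto
  have "c = 0" "a = 0"
    using orth_0 orth_1 has_bochner_integral_std_gauss_affine
    unfolding affine by (metis has_bochner_integral_integral_eq)+
  with affine assms(3) show False
    by simp
qed

end
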